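(* Let $X,Y$ be finite sets, $\mu\in\mathcal P(X)$, $\nu\in\mathcal P(Y)$, $c\in\mathbb R_+^{X\times Y}$, $\varepsilon>0$. Let $\{X_i\}_{i=1}^R$, $\{Y_i\}_{i=1}^R$ be partitions of $X$ and $Y$ with $\mu(X_i)=\nu(Y_i)$ for all $i$, and $y_i\in Y_i$ for $i=1,\dots,R$. Let $(\alpha^\dagger,\beta^\dagger)$ be a maximizer of the dual entropic OT functional $J_\varepsilon$. Define $d\in\mathbb R^{R\times R}$ by $$d(i,j)=-\varepsilon\log\Big(\sum_{x\in X_i,\,y\in Y_j}\exp\Big(-\tfrac1\varepsilon\big[c(x,y)-\alpha^\dagger(x)-\beta^\dagger(y_i)-\beta^\dagger(y)+\beta^\dagger(y_j)\big]\Big)\mu(x)\nu(y)\Big),$$ and $\hat J:\mathbb R^R\to\mathbb R$, $\hat J(\hat\beta)=-\varepsilon\sum_{i,j=1}^R\exp\big(-\tfrac1\varepsilon[d(i,j)+\hat\beta(i)-\hat\beta(j)]\big)$. Then $\hat\beta^\dagger\in\mathbb R^R$, $\hat\beta^\dagger(i)=\beta^\dagger(y_i)$, is a maximizer of $\hat J$, and conversely every maximizer $\hat\beta^{\dagger\dagger}$ of $\hat J$ satisfies $\hat\beta^{\dagger\dagger}=\hat\beta^\dagger+b$ for some constant $b\in\mathbb R$.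
   Context: $J_\varepsilon(\alpha,\beta)=\langle\alpha,\mu\rangle+\langle\beta,\nu\rangle-\varepsilon\sum_{x,y}K(x,y)\big(\exp((\alpha(x)+\beta(y))/\varepsilon)-1\big)$ with $K(x,y)=\exp(-c(x,y)/\varepsilon)\mu(x)\nu(y)$. $\mu(A)=\sum_{x\in A}\mu(x)$. *)

theory Defs
  imports Complex_Main
begin

definition prob_vec :: "'a set \<Rightarrow> ('a \<Rightarrow> real) \<Rightarrow> bool" where
  "prob_vec A m \<longleftrightarrow> finite A \<and> (\<forall>x\<in>A. m x > 0) \<and> (\<Sum>x\<in>A. m x) = 1"

definition mass :: "('a \<Rightarrow> real) \<Rightarrow> 'a set \<Rightarrow> real" where
  "mass m A = (\<Sum>x\<in>A. m x)"

definition Kker :: "real \<Rightarrow> ('a \<Rightarrow> 'b \<Rightarrow> real) \<Rightarrow> ('a \<Rightarrow> real) \<Rightarrow> ('b \<Rightarrow> real) \<Rightarrow> 'a \<Rightarrow> 'b \<Rightarrow> real" where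
  "Kker eps c mu nu x y = exp (- c x y / eps) * mu x * nu y"

definition J_eps :: "real \<Rightarrow> 'a set \<Rightarrow> 'b set \<Rightarrow> ('a \<Rightarrow> 'b \<Rightarrow> real) \<Rightarrow> ('a \<Rightarrow> real) \<Rightarrow> ('b \<Rightarrow> real)
    \<Rightarrow> ('a \<Rightarrow> real) \<Rightarrow> ('b \<Rightarrow> real) \<Rightarrow> real" where
  "J_eps eps X Y c mu nu \<alpha> \<beta> =
     (\<Sum>x\<in>X. \<alpha> x * mu x) + (\<Sum>y\<in>Y. \<beta> y * nu y)
     - eps * (\<Sum>x\<in>X. \<Sum>y\<in>Y. Kker eps c mu nu x y * (exp ((\<alpha> x + \<beta> y) / eps) - 1))"

definition is_partition :: "'a set \<Rightarrow> nat \<Rightarrow> (nat \<Rightarrow> 'a set) \<Rightarrow> bool" where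
  "is_partition A R P \<longleftrightarrow>
     (\<forall>i\<in>{1..R}. P i \<noteq> {} \<and> P i \<subseteq> A) \<and>
     (\<forall>i\<in>{1..R}. \<forall>j\<in>{1..R}. i \<noteq> j \<longrightarrow> P i \<inter> P j = {}) \<and>
     (\<Union>i\<in>{1..R}. P i) = A"

definition coarse_d :: "real \<Rightarrow> ('a \<Rightarrow> 'b \<Rightarrow> real) \<Rightarrow> ('a \<Rightarrow> real) \<Rightarrow> ('b \<Rightarrow> real)
    \<Rightarrow> (nat \<Rightarrow> 'a set) \<Rightarrow> (nat \<Rightarrow> 'b set) \<Rightarrow> (nat \<Rightarrow> 'b)
    \<Rightarrow> ('a \<Rightarrow> real) \<Rightarrow> ('b \<Rightarrow> real) \<Rightarrow> nat \<Rightarrow> nat \<Rightarrow> real" where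
  "coarse_d eps c mu nu Xp Yp yr \<alpha> \<beta> i j =
     - eps * ln (\<Sum>x\<in>Xp i. \<Sum>y\<in>Yp j.
        exp (- (1/eps) * (c x y - \<alpha> x - \<beta> (yr i) - \<beta> y + \<beta> (yr j))) * mu x * nu y)"

definition J_hat :: "real \<Rightarrow> nat \<Rightarrow> (nat \<Rightarrow> nat \<Rightarrow> real) \<Rightarrow> (nat \<Rightarrow> real) \<Rightarrow> real" where
  "J_hat eps R d b = - eps * (\<Sum>i\<in>{1..R}. \<Sum>j\<in>{1..R}. exp (- (1/eps) * (d i j + b i - b j)))"

end

(*
  Maximality of J_eps in each single coordinate alpha(x), beta(y) is a first-order condition:
  the entropic plan pi(x,y) = K(x,y) exp((alpha(x) + beta(y))/eps) has marginals mu and nu.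
  Summing pi over the blocks X_i x Y_j gives a positive R x R matrix P whose i-th row sum mu(X_i)
  equals its i-th column sum nu(Y_i).  With w(i) = (b(i) - beta(y_i))/eps the coarse functional is
  hat J(b) = -eps * sum P_ij exp(w_j - w_i), and since P is balanced the linear terms cancel:
    sum P_ij exp(w_j - w_i) - sum P_ij = sum P_ij (exp(w_j - w_i) - 1 - (w_j - w_i)) >= 0,
  with equality exactly when w is constant.
*)

theory Submission imports Defs begin

definition entropic_plan :: "real \<Rightarrow> ('a \<Rightarrow> 'b \<Rightarrow> real) \<Rightarrow> ('a \<Rightarrow> real) \<Rightarrow> ('b \<Rightarrow> real)
    \<Rightarrow> ('a \<Rightarrow> real) \<Rightarrow> ('b \<Rightarrow> real) \<Rightarrow> 'a \<Rightarrow> 'b \<Rightarrow> real" where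
  "entropic_plan eps c mu nu \<alpha> \<beta> x y = Kker eps c mu nu x y * exp ((\<alpha> x + \<beta> y) / eps)"

definition balanced :: "'i set \<Rightarrow> ('i \<Rightarrow> 'i \<Rightarrow> real) \<Rightarrow> bool" where
  "balanced I P \<longleftrightarrow> (\<forall>i\<in>I. (\<Sum>j\<in>I. P i j) = (\<Sum>j\<in>I. P j i))"

definition block_sum :: "('a \<Rightarrow> 'b \<Rightarrow> real) \<Rightarrow> ('i \<Rightarrow> 'a set) \<Rightarrow> ('i \<Rightarrow> 'b set) \<Rightarrow> 'i \<Rightarrow> 'i \<Rightarrow> real" where
  "block_sum \<pi> Xp Yp i j = (\<Sum>x\<in>Xp i. \<Sum>y\<in>Yp j. \<pi> x y)"

lemma exp_le_add_one_self_iff: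
  fixes t :: real
  shows "exp t \<le> 1 + t \<longleftrightarrow> t = 0"
proof
  assume le: "exp t \<le> 1 + t"
  show "t = 0"
  proof (rule ccontr)
    assume "t \<noteq> 0"
    show False
    proof (cases "1 + t / 2 \<ge> 0")
      case True
      have "(1 + t / 2)\<^sup>2 \<le> exp (t / 2) ^ 2"
        using True exp_ge_add_one_self[of "t / 2"] by (intro power_mono) auto
      also have "exp (t / 2) ^ 2 = exp t"
        by (simp add: power2_eq_square flip: exp_add)
      finally have "1 + t + t\<^sup>2 / 4 \<le> exp t"
        by (simp add: power2_eq_square field_simps)
      moreover have "t\<^sup>2 > 0" using \<open>t \<noteq> 0\<close> by simp
      ultimately show False using le by linarith
    next
      case False
      with le exp_gt_zero[of t] show False by linarith
    qed
  qed
qed simp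

lemma stationary_exp_penalty:
  fixes m A eps :: real
  assumes "eps \<noteq> 0" and le: "\<And>s. s * m - eps * (A * (exp (s / eps) - 1)) \<le> 0"
  shows "A = m"
proof -
  define g where "g s = s * m - eps * (A * (exp (s / eps) - 1))" for s
  have der: "(g has_real_derivative m - A) (at 0)"
    unfolding g_def using assms(1) by (auto intro!: derivative_eq_intros)
  have max: "\<forall>s. \<bar>0 - s\<bar> < 1 \<longrightarrow> g s \<le> g 0"
    using le by (simp add: g_def)
  have "m - A = 0"
    using der zero_less_one max by (rule DERIV_local_max)
  then show ?thesis by simp
qed

lemma sum_eq_except_point:
  fixes g h :: "'a \<Rightarrow> 'b::ab_group_add"
  assumes "finite A" "a \<in> A" "\<And>x. x \<in> A \<Longrightarrow> x \<noteq> a \<Longrightarrow> g x = h x"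
  shows "sum g A = sum h A + (g a - h a)"
proof -
  have "sum g (A - {a}) = sum h (A - {a})" using assms(3) by (intro sum.cong) auto
  moreover have "sum g A = g a + sum g (A - {a})" "sum h A = h a + sum h (A - {a})"
    using assms(1,2) by (simp_all add: sum.remove)
  ultimately show ?thesis by (simp add: algebra_simps)
qed

lemma J_eps_swap:
  "J_eps eps X Y c mu nu \<alpha> \<beta> = J_eps eps Y X (\<lambda>y x. c x y) nu mu \<beta> \<alpha>"
  unfolding J_eps_def Kker_def by (subst (2) sum.swap) (simp add: ac_simps)

lemma J_eps_update_fst:
  assumes "finite X" "x0 \<in> X"
  shows "J_eps eps X Y c mu nu (\<alpha>(x0 := \<alpha> x0 + s)) \<beta> = J_eps eps X Y c mu nu \<alpha> \<beta>
     + (s * mu x0 - eps * ((\<Sum>y\<in>Y. entropic_plan eps c mu nu \<alpha> \<beta> x0 y) * (exp (s / eps) - 1)))"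
proof -
  define row where "row \<alpha>' x = \<alpha>' x * mu x
      - eps * (\<Sum>y\<in>Y. Kker eps c mu nu x y * (exp ((\<alpha>' x + \<beta> y) / eps) - 1))" for \<alpha>' x
  have J_row: "J_eps eps X Y c mu nu \<alpha>' \<beta> = (\<Sum>x\<in>X. row \<alpha>' x) + (\<Sum>y\<in>Y. \<beta> y * nu y)" for \<alpha>'
    unfolding J_eps_def row_def by (simp add: sum_subtractf sum_distrib_left)
  have "(\<Sum>x\<in>X. row (\<alpha>(x0 := \<alpha> x0 + s)) x) = (\<Sum>x\<in>X. row \<alpha> x)
      + (row (\<alpha>(x0 := \<alpha> x0 + s)) x0 - row \<alpha> x0)"
    using assms by (rule sum_eq_except_point) (simp add: row_def)
  moreover have "row (\<alpha>(x0 := \<alpha> x0 + s)) x0 - row \<alpha> x0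
      = s * mu x0 - eps * ((\<Sum>y\<in>Y. entropic_plan eps c mu nu \<alpha> \<beta> x0 y) * (exp (s / eps) - 1))"
  proof -
    have shift: "exp ((\<alpha> x0 + s + \<beta> y) / eps) = exp (s / eps) * exp ((\<alpha> x0 + \<beta> y) / eps)" for y
      by (simp add: add_divide_distrib algebra_simps flip: exp_add)
    have "row (\<alpha>(x0 := \<alpha> x0 + s)) x0 - row \<alpha> x0
        = s * mu x0 - eps * ((\<Sum>y\<in>Y. Kker eps c mu nu x0 y * (exp ((\<alpha> x0 + s + \<beta> y) / eps) - 1))
          - (\<Sum>y\<in>Y. Kker eps c mu nu x0 y * (exp ((\<alpha> x0 + \<beta> y) / eps) - 1)))"
      by (simp add: row_def algebra_simps)
    also have "(\<Sum>y\<in>Y. Kker eps c mu nu x0 y * (exp ((\<alpha> x0 + s + \<beta> y) / eps) - 1))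
        - (\<Sum>y\<in>Y. Kker eps c mu nu x0 y * (exp ((\<alpha> x0 + \<beta> y) / eps) - 1))
        = (\<Sum>y\<in>Y. entropic_plan eps c mu nu \<alpha> \<beta> x0 y) * (exp (s / eps) - 1)"
      unfolding sum_subtractf[symmetric] sum_distrib_right shift
      by (intro sum.cong refl) (simp add: entropic_plan_def algebra_simps)
    finally show ?thesis .
  qed
  ultimately show ?thesis unfolding J_row by linarith
qed

lemma maximizer_marginal_fst:
  assumes "finite X" "x \<in> X" "eps \<noteq> 0"
    and max: "\<forall>\<alpha>' \<beta>'. J_eps eps X Y c mu nu \<alpha>' \<beta>' \<le> J_eps eps X Y c mu nu \<alpha> \<beta>"
  shows "(\<Sum>y\<in>Y. entropic_plan eps c mu nu \<alpha> \<beta> x y) = mu x"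
proof (rule stationary_exp_penalty[OF \<open>eps \<noteq> 0\<close>])
  fix s
  show "s * mu x - eps * ((\<Sum>y\<in>Y. entropic_plan eps c mu nu \<alpha> \<beta> x y) * (exp (s / eps) - 1)) \<le> 0"
    using max[rule_format, of "\<alpha>(x := \<alpha> x + s)" \<beta>] J_eps_update_fst[OF assms(1,2), of eps Y c mu nu \<alpha> s \<beta>]
    by linarith
qed

lemma maximizer_marginal_snd:
  assumes "finite Y" "y \<in> Y" "eps \<noteq> 0"
    and "\<forall>\<alpha>' \<beta>'. J_eps eps X Y c mu nu \<alpha>' \<beta>' \<le> J_eps eps X Y c mu nu \<alpha> \<beta>"
  shows "(\<Sum>x\<in>X. entropic_plan eps c mu nu \<alpha> \<beta> x y) = nu y"
proof -
  have "\<forall>\<beta>' \<alpha>'. J_eps eps Y X (\<lambda>y x. c x y) nu mu \<beta>' \<alpha>' \<le> J_eps eps Y X (\<lambda>y x. c x y) nu mu \<beta> \<alpha>"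
    using assms(4) unfolding J_eps_swap[of eps X Y c mu nu] by blast
  from maximizer_marginal_fst[OF assms(1-3) this]
  show ?thesis unfolding entropic_plan_def Kker_def by (simp add: ac_simps)
qed

lemma sum_over_partition:
  assumes "is_partition A R P" "finite A"
  shows "sum g A = (\<Sum>i\<in>{1..R}. sum g (P i))"
proof -
  have "\<forall>i\<in>{1..R}. finite (P i)"
    using assms finite_subset unfolding is_partition_def by blast
  then have "sum g (\<Union>i\<in>{1..R}. P i) = (\<Sum>i\<in>{1..R}. sum g (P i))"
    using assms(1) unfolding is_partition_def by (intro sum.UNION_disjoint) auto
  with assms(1) show ?thesis
    unfolding is_partition_def by simp
qed

lemma block_sum_row:
  assumes "is_partition Y R Yp" "finite Y"
  shows "(\<Sum>j\<in>{1..R}. block_sum \<pi> Xp Yp i j) = (\<Sum>x\<in>Xp i. \<Sum>y\<in>Y. \<pi> x y)"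
  unfolding block_sum_def sum_over_partition[OF assms] by (rule sum.swap)

lemma block_sum_col:
  assumes "is_partition X R Xp" "finite X"
  shows "(\<Sum>i\<in>{1..R}. block_sum \<pi> Xp Yp i j) = (\<Sum>y\<in>Yp j. \<Sum>x\<in>X. \<pi> x y)"
  unfolding block_sum_def sum_over_partition[OF assms] by (simp only: sum.swap[of _ "Yp j"])

lemma block_sum_pos:
  assumes "finite (Xp i)" "Xp i \<noteq> {}" "finite (Yp j)" "Yp j \<noteq> {}"
    and "\<And>x y. x \<in> Xp i \<Longrightarrow> y \<in> Yp j \<Longrightarrow> \<pi> x y > 0"
  shows "block_sum \<pi> Xp Yp i j > 0"
  unfolding block_sum_def using assms by (intro sum_pos) auto

lemma balanced_sum_mult_diff:
  fixes P :: "'i \<Rightarrow> 'i \<Rightarrow> real"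
  assumes "balanced I P"
  shows "(\<Sum>i\<in>I. \<Sum>j\<in>I. P i j * (w j - w i)) = 0"
proof -
  have "(\<Sum>i\<in>I. \<Sum>j\<in>I. P i j * w j) = (\<Sum>j\<in>I. w j * (\<Sum>i\<in>I. P i j))"
    by (subst sum.swap) (simp add: sum_distrib_left mult.commute)
  also have "\<dots> = (\<Sum>j\<in>I. w j * (\<Sum>i\<in>I. P j i))"
    using assms unfolding balanced_def by simp
  also have "\<dots> = (\<Sum>i\<in>I. \<Sum>j\<in>I. P i j * w i)"
    by (simp add: sum_distrib_left mult.commute)
  finally show ?thesis
    by (simp add: right_diff_distrib sum_subtractf)
qed

lemma balanced_sum_exp_excess:
  fixes P :: "'i \<Rightarrow> 'i \<Rightarrow> real"
  assumes "balanced I P"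
  shows "(\<Sum>i\<in>I. \<Sum>j\<in>I. P i j * exp (w j - w i)) - (\<Sum>i\<in>I. \<Sum>j\<in>I. P i j)
       = (\<Sum>i\<in>I. \<Sum>j\<in>I. P i j * (exp (w j - w i) - (1 + (w j - w i))))"
  using balanced_sum_mult_diff[OF assms, of w]
  by (simp add: right_diff_distrib distrib_left sum_subtractf sum.distrib)

lemma balanced_sum_le_sum_exp:
  fixes P :: "'i \<Rightarrow> 'i \<Rightarrow> real"
  assumes "balanced I P"
    and "\<And>i j. i \<in> I \<Longrightarrow> j \<in> I \<Longrightarrow> P i j \<ge> 0"
  shows "(\<Sum>i\<in>I. \<Sum>j\<in>I. P i j) \<le> (\<Sum>i\<in>I. \<Sum>j\<in>I. P i j * exp (w j - w i))"
proof -
  have "0 \<le> (\<Sum>i\<in>I. \<Sum>j\<in>I. P i j * (exp (w j - w i) - (1 + (w j - w i))))"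
    using assms(2) by (intro sum_nonneg mult_nonneg_nonneg) auto
  then show ?thesis
    using balanced_sum_exp_excess[OF assms(1), of w] by linarith
qed

lemma balanced_sum_exp_le_imp_const:
  fixes P :: "'i \<Rightarrow> 'i \<Rightarrow> real"
  assumes "finite I"
    and "balanced I P"
    and "\<And>i j. i \<in> I \<Longrightarrow> j \<in> I \<Longrightarrow> P i j > 0"
    and "(\<Sum>i\<in>I. \<Sum>j\<in>I. P i j * exp (w j - w i)) \<le> (\<Sum>i\<in>I. \<Sum>j\<in>I. P i j)"
    and "i \<in> I" "j \<in> I"
  shows "w i = w j"
proof -
  define f where "f i j = P i j * (exp (w j - w i) - (1 + (w j - w i)))" for i j
  have f_nonneg: "f i j \<ge> 0" if "i \<in> I" "j \<in> I" for i j
    using assms(3)[OF that] unfolding f_def by (simp add: less_imp_le)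
  have "(\<Sum>i\<in>I. \<Sum>j\<in>I. f i j) \<le> 0"
    using balanced_sum_exp_excess[OF assms(2), of w] assms(4) unfolding f_def by linarith
  moreover have "(\<Sum>i\<in>I. \<Sum>j\<in>I. f i j) \<ge> 0"
    using f_nonneg by (intro sum_nonneg) auto
  ultimately have "(\<Sum>i\<in>I. \<Sum>j\<in>I. f i j) = 0" by linarith
  then have "\<forall>i\<in>I. \<forall>j\<in>I. f i j = 0"
    using assms(1) f_nonneg by (simp add: sum_nonneg_eq_0_iff sum_nonneg)
  then have "exp (w j - w i) \<le> 1 + (w j - w i)"
    using assms(3,5,6) unfolding f_def by fastforce
  then show ?thesis
    unfolding exp_le_add_one_self_iff by simp
qed

lemma entropic_plan_pos:
  "mu x > 0 \<Longrightarrow> nu y > 0 \<Longrightarrow> entropic_plan eps c mu nu \<alpha> \<beta> x y > 0"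
  unfolding entropic_plan_def Kker_def by simp

lemma block_sum_entropic_plan_pos:
  assumes "is_partition X R Xp" "is_partition Y R Yp" "finite X" "finite Y"
    and "\<forall>x\<in>X. mu x > 0" "\<forall>y\<in>Y. nu y > 0"
    and "i \<in> {1..R}" "j \<in> {1..R}"
  shows "block_sum (entropic_plan eps c mu nu \<alpha> \<beta>) Xp Yp i j > 0"
proof -
  have "Xp i \<noteq> {}" "Xp i \<subseteq> X" "Yp j \<noteq> {}" "Yp j \<subseteq> Y"
    using assms(1,2,7,8) unfolding is_partition_def by auto
  with assms(3-6) show ?thesis
    by (intro block_sum_pos entropic_plan_pos) (auto intro: finite_subset)
qed

lemma maximizer_block_sum_balanced:
  assumes "is_partition X R Xp" "is_partition Y R Yp" "finite X" "finite Y" "eps \<noteq> 0"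
    and "\<forall>i\<in>{1..R}. mass mu (Xp i) = mass nu (Yp i)"
    and "\<forall>\<alpha>' \<beta>'. J_eps eps X Y c mu nu \<alpha>' \<beta>' \<le> J_eps eps X Y c mu nu \<alpha> \<beta>"
  shows "balanced {1..R} (block_sum (entropic_plan eps c mu nu \<alpha> \<beta>) Xp Yp)"
  unfolding balanced_def
proof
  fix i :: nat assume i: "i \<in> {1..R}"
  have "Xp i \<subseteq> X" "Yp i \<subseteq> Y"
    using assms(1,2) i unfolding is_partition_def by auto
  then have "(\<Sum>x\<in>Xp i. \<Sum>y\<in>Y. entropic_plan eps c mu nu \<alpha> \<beta> x y) = mass mu (Xp i)"
    and "(\<Sum>y\<in>Yp i. \<Sum>x\<in>X. entropic_plan eps c mu nu \<alpha> \<beta> x y) = mass nu (Yp i)"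
    unfolding mass_def using maximizer_marginal_fst[OF assms(3) _ assms(5,7)]
      maximizer_marginal_snd[OF assms(4) _ assms(5,7)] by (auto intro!: sum.cong)
  with assms(6) i show "(\<Sum>j\<in>{1..R}. block_sum (entropic_plan eps c mu nu \<alpha> \<beta>) Xp Yp i j)
      = (\<Sum>j\<in>{1..R}. block_sum (entropic_plan eps c mu nu \<alpha> \<beta>) Xp Yp j i)"
    unfolding block_sum_row[OF assms(2,4)] block_sum_col[OF assms(1,3)] by simp
qed

lemma coarse_d_block_sum:
  "coarse_d eps c mu nu Xp Yp yr \<alpha> \<beta> i j = - eps * ln (exp ((\<beta> (yr i) - \<beta> (yr j)) / eps)
     * block_sum (entropic_plan eps c mu nu \<alpha> \<beta>) Xp Yp i j)"
proof -
  have "exp (- (1/eps) * (c x y - \<alpha> x - \<beta> (yr i) - \<beta> y + \<beta> (yr j))) * mu x * nu y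
      = exp ((\<beta> (yr i) - \<beta> (yr j)) / eps) * entropic_plan eps c mu nu \<alpha> \<beta> x y" for x y
  proof -
    have exponent: "- (1/eps) * (c x y - \<alpha> x - \<beta> (yr i) - \<beta> y + \<beta> (yr j))
        = (\<beta> (yr i) - \<beta> (yr j)) / eps + - c x y / eps + (\<alpha> x + \<beta> y) / eps"
      by (simp add: diff_divide_distrib add_divide_distrib)
    show ?thesis
      unfolding exponent exp_add entropic_plan_def Kker_def by (simp add: ac_simps)
  qed
  then show ?thesis
    unfolding coarse_d_def block_sum_def by (simp add: sum_distrib_left)
qed

lemma J_hat_coarse_d:
  assumes "eps \<noteq> 0"
    and "\<And>i j. i \<in> {1..R} \<Longrightarrow> j \<in> {1..R} \<Longrightarrow> block_sum (entropic_plan eps c mu nu \<alpha> \<beta>) Xp Yp i j > 0"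
  shows "J_hat eps R (coarse_d eps c mu nu Xp Yp yr \<alpha> \<beta>) b = - eps * (\<Sum>i\<in>{1..R}. \<Sum>j\<in>{1..R}.
      block_sum (entropic_plan eps c mu nu \<alpha> \<beta>) Xp Yp i j
        * exp ((b j - \<beta> (yr j)) / eps - (b i - \<beta> (yr i)) / eps))"
proof -
  have summand: "exp (- (1/eps) * (coarse_d eps c mu nu Xp Yp yr \<alpha> \<beta> i j + b i - b j))
      = block_sum (entropic_plan eps c mu nu \<alpha> \<beta>) Xp Yp i j
        * exp ((b j - \<beta> (yr j)) / eps - (b i - \<beta> (yr i)) / eps)"
    if "i \<in> {1..R}" "j \<in> {1..R}" for i j
  proof -
    let ?E = "exp ((\<beta> (yr i) - \<beta> (yr j)) / eps)"
    let ?P = "block_sum (entropic_plan eps c mu nu \<alpha> \<beta>) Xp Yp i j"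
    have "?E * ?P > 0" using assms(2)[OF that] by simp
    moreover have "- (1/eps) * (coarse_d eps c mu nu Xp Yp yr \<alpha> \<beta> i j + b i - b j)
        = ln (?E * ?P) + (b j - b i) / eps"
      unfolding coarse_d_block_sum using assms(1) by (simp add: field_simps)
    ultimately have "exp (- (1/eps) * (coarse_d eps c mu nu Xp Yp yr \<alpha> \<beta> i j + b i - b j))
        = ?P * (?E * exp ((b j - b i) / eps))"
      by (simp add: exp_add)
    also have "?E * exp ((b j - b i) / eps) = exp ((b j - \<beta> (yr j)) / eps - (b i - \<beta> (yr i)) / eps)"
      by (simp add: diff_divide_distrib algebra_simps flip: exp_add)
    finally show ?thesis .
  qed
  show ?thesis
    unfolding J_hat_def by (intro arg_cong[where f="\<lambda>s. - eps * s"] sum.cong refl summand) auto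
qed

theorem mainTheorem8:
  fixes X :: "'a set" and Y :: "'b set"
    and mu :: "'a \<Rightarrow> real" and nu :: "'b \<Rightarrow> real"
    and c :: "'a \<Rightarrow> 'b \<Rightarrow> real" and eps :: real
    and R :: nat and Xp :: "nat \<Rightarrow> 'a set" and Yp :: "nat \<Rightarrow> 'b set" and yr :: "nat \<Rightarrow> 'b"
    and \<alpha>d :: "'a \<Rightarrow> real" and \<beta>d :: "'b \<Rightarrow> real"
  assumes "finite X" "finite Y"
    and "prob_vec X mu" "prob_vec Y nu"
    and "\<forall>x\<in>X. \<forall>y\<in>Y. c x y \<ge> 0"
    and "eps > 0"
    and "is_partition X R Xp" "is_partition Y R Yp"
    and "\<forall>i\<in>{1..R}. mass mu (Xp i) = mass nu (Yp i)"
    and "\<forall>i\<in>{1..R}. yr i \<in> Yp i"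
    and "\<forall>\<alpha> \<beta>. J_eps eps X Y c mu nu \<alpha> \<beta> \<le> J_eps eps X Y c mu nu \<alpha>d \<beta>d"
  shows "(\<forall>b. J_hat eps R (coarse_d eps c mu nu Xp Yp yr \<alpha>d \<beta>d) b
              \<le> J_hat eps R (coarse_d eps c mu nu Xp Yp yr \<alpha>d \<beta>d) (\<lambda>i. \<beta>d (yr i)))
       \<and> (\<forall>b2. (\<forall>b. J_hat eps R (coarse_d eps c mu nu Xp Yp yr \<alpha>d \<beta>d) b
                    \<le> J_hat eps R (coarse_d eps c mu nu Xp Yp yr \<alpha>d \<beta>d) b2)
              \<longrightarrow> (\<exists>t::real. \<forall>i\<in>{1..R}. b2 i = \<beta>d (yr i) + t))"
proof -
  let ?d = "coarse_d eps c mu nu Xp Yp yr \<alpha>d \<beta>d"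
  let ?P = "block_sum (entropic_plan eps c mu nu \<alpha>d \<beta>d) Xp Yp"
  define w where "w b i = (b i - \<beta>d (yr i)) / eps" for b :: "nat \<Rightarrow> real" and i
  have eps: "eps \<noteq> 0" using assms(6) by simp
  have pos: "\<And>i j. i \<in> {1..R} \<Longrightarrow> j \<in> {1..R} \<Longrightarrow> ?P i j > 0"
    using assms(3,4) unfolding prob_vec_def by (intro block_sum_entropic_plan_pos[OF assms(7,8,1,2)]) auto
  have balanced: "balanced {1..R} ?P"
    by (rule maximizer_block_sum_balanced[OF assms(7,8,1,2) eps assms(9,11)])
  have J_hat_eq: "J_hat eps R ?d b = - eps * (\<Sum>i\<in>{1..R}. \<Sum>j\<in>{1..R}. ?P i j * exp (w b j - w b i))" for b
    unfolding w_def by (rule J_hat_coarse_d[OF eps pos])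
  have J_hat_at_\<beta>d: "J_hat eps R ?d (\<lambda>i. \<beta>d (yr i)) = - eps * (\<Sum>i\<in>{1..R}. \<Sum>j\<in>{1..R}. ?P i j)"
    by (simp add: J_hat_eq w_def)
  have "J_hat eps R ?d b \<le> J_hat eps R ?d (\<lambda>i. \<beta>d (yr i))" for b
    using balanced_sum_le_sum_exp[OF balanced less_imp_le[OF pos], of "w b"] assms(6)
    unfolding J_hat_at_\<beta>d J_hat_eq by (intro mult_left_mono_neg) auto
  moreover have "\<exists>t. \<forall>i\<in>{1..R}. b2 i = \<beta>d (yr i) + t" if "\<forall>b. J_hat eps R ?d b \<le> J_hat eps R ?d b2" for b2
  proof (intro exI ballI)
    fix i assume i: "i \<in> {1..R}"
    have "(\<Sum>i\<in>{1..R}. \<Sum>j\<in>{1..R}. ?P i j * exp (w b2 j - w b2 i)) \<le> (\<Sum>i\<in>{1..R}. \<Sum>j\<in>{1..R}. ?P i j)"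
      using that[rule_format, of "\<lambda>i. \<beta>d (yr i)"] assms(6)
      unfolding J_hat_at_\<beta>d J_hat_eq by (simp only: mult_le_cancel_left_neg neg_less_0_iff_less)
    moreover have "1 \<in> {1..R}" using i by simp
    ultimately have "w b2 i = w b2 1"
      using balanced_sum_exp_le_imp_const[OF finite_atLeastAtMost balanced pos] i by blast
    then show "b2 i = \<beta>d (yr i) + (b2 1 - \<beta>d (yr 1))"
      using eps unfolding w_def by (simp add: field_simps)
  qed
  ultimately show ?thesis by blast
qed

end
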